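(* Let $M$ be a matroid on a finite set $E$, and let $P$ and $Q$ be two partitions of $\cup\mathcal{B}(M)$ such that for every $B\in\mathcal{B}(M)$, every $K\in P$ and every $L\in Q$, we have $|B\cap K|=1$ and $|B\cap L|=1$. Then $P=Q$.
   Context: $\mathcal{B}(M)$ denotes the family of bases of $M$ and $\cup\mathcal{B}(M)$ the union of all bases. A partition of a set $U$ is a family of nonempty pairwise disjoint subsets of $U$ whose union is $U$. *)

theory Defs
  imports Main
begin

definition matroid :: "'a set \<Rightarrow> ('a set \<Rightarrow> bool) \<Rightarrow> bool" where
  "matroid E indep \<longleftrightarrow>
     finite E \<and>
     (\<forall>X. indep X \<longrightarrow> X \<subseteq> E) \<and>
     indep {} \<and>
     (\<forall>X Y. indep X \<and> Y \<subseteq> X \<longrightarrow> indep Y) \<and>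
     (\<forall>X Y. indep X \<and> indep Y \<and> card X < card Y \<longrightarrow>
        (\<exists>y \<in> Y - X. indep (insert y X)))"

definition bases :: "'a set \<Rightarrow> ('a set \<Rightarrow> bool) \<Rightarrow> 'a set set" where
  "bases E indep = {B. B \<subseteq> E \<and> indep B \<and> (\<forall>X. indep X \<and> B \<subseteq> X \<longrightarrow> X = B)}"

definition is_partition :: "'a set set \<Rightarrow> 'a set \<Rightarrow> bool" where
  "is_partition P U \<longleftrightarrow>
     (\<forall>K \<in> P. K \<noteq> {}) \<and>
     (\<forall>K \<in> P. \<forall>L \<in> P. K \<noteq> L \<longrightarrow> K \<inter> L = {}) \<and>
     \<Union>P = U"

end

theory Submission
  imports Defs
begin

text \<open>
  Suppose blocks \<open>K \<in> P\<close> and \<open>L \<in> Q\<close> share an element \<open>x\<close>, and let \<open>y \<in> K\<close>.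
  Choose a basis \<open>B\<close> containing \<open>y\<close>; it avoids \<open>x\<close>, since it meets \<open>K\<close> only once.
  Extending \<open>{x}\<close> inside \<open>{x} \<union> B\<close> gives a basis \<open>B'\<close> that again meets \<open>K\<close> only in \<open>x\<close>,
  so \<open>B' = B - {y} \<union> {x}\<close> by counting. If \<open>y \<notin> L\<close>, the unique element of \<open>B \<inter> L\<close>
  survives in \<open>B'\<close> next to \<open>x \<in> L\<close>, contradicting \<open>|B' \<inter> L| = 1\<close>. Hence \<open>K \<subseteq> L\<close>,
  by symmetry \<open>K = L\<close>, and two partitions of the same set whose overlapping blocks
  coincide are equal.
\<close>

lemma matroid_finite: "matroid E indep \<Longrightarrow> finite E"
  unfolding matroid_def by blast

lemma matroid_indep_subset: "matroid E indep \<Longrightarrow> indep X \<Longrightarrow> X \<subseteq> E"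
  unfolding matroid_def by blast

lemma matroid_indep_finite: "matroid E indep \<Longrightarrow> indep X \<Longrightarrow> finite X"
  using matroid_finite matroid_indep_subset finite_subset by metis

lemma matroid_indep_mono: "matroid E indep \<Longrightarrow> indep X \<Longrightarrow> Y \<subseteq> X \<Longrightarrow> indep Y"
  unfolding matroid_def by blast

lemma matroid_augment:
  "matroid E indep \<Longrightarrow> indep X \<Longrightarrow> indep Y \<Longrightarrow> card X < card Y
    \<Longrightarrow> \<exists>y \<in> Y - X. indep (insert y X)"
  unfolding matroid_def by blast

lemma bases_indep: "B \<in> bases E indep \<Longrightarrow> indep B"
  unfolding bases_def by blast

lemma bases_maximal: "B \<in> bases E indep \<Longrightarrow> indep X \<Longrightarrow> B \<subseteq> X \<Longrightarrow> X = B"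
  unfolding bases_def by blast

lemma bases_not_card_less:
  assumes m: "matroid E indep" and "B \<in> bases E indep" and "B' \<in> bases E indep"
  shows "\<not> card B < card B'"
proof
  assume "card B < card B'"
  then obtain y where "y \<in> B' - B" "indep (insert y B)"
    using matroid_augment[OF m] bases_indep assms(2,3) by blast
  with bases_maximal[OF assms(2)] show False by blast
qed

lemma bases_card_eq:
  "matroid E indep \<Longrightarrow> B \<in> bases E indep \<Longrightarrow> B' \<in> bases E indep \<Longrightarrow> card B = card B'"
  using bases_not_card_less by (metis linorder_neqE_nat)

lemma indep_extend_to_basis_within:
  assumes m: "matroid E indep" and X: "indep X" and B: "B \<in> bases E indep"
  shows "\<exists>B' \<in> bases E indep. X \<subseteq> B' \<and> B' \<subseteq> X \<union> B"
proof -
  let ?S = "{Y. indep Y \<and> X \<subseteq> Y \<and> Y \<subseteq> X \<union> B}"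
  have "X \<in> ?S" using X by blast
  moreover have "\<forall>Y. Y \<in> ?S \<longrightarrow> card Y < Suc (card E)"
  proof (intro allI impI)
    fix Y assume "Y \<in> ?S"
    then have "Y \<subseteq> E" by (simp add: matroid_indep_subset[OF m])
    then show "card Y < Suc (card E)" using card_mono[OF matroid_finite[OF m]] by (simp add: less_Suc_eq_le)
  qed
  ultimately have "\<exists>Y. Y \<in> ?S \<and> (\<forall>Z. Z \<in> ?S \<longrightarrow> card Z \<le> card Y)"
    by (rule Lattices_Big.ex_has_greatest_nat)
  then obtain Y where Y: "Y \<in> ?S" and Y_max: "\<And>Z. Z \<in> ?S \<Longrightarrow> card Z \<le> card Y"
    by blast
  from Y have Y_indep: "indep Y" and "X \<subseteq> Y" "Y \<subseteq> X \<union> B" by simp_all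
  have "card B \<le> card Y"
  proof (rule ccontr)
    assume "\<not> card B \<le> card Y"
    then obtain y where y: "y \<in> B - Y" "indep (insert y Y)"
      using matroid_augment[OF m Y_indep bases_indep[OF B]] by auto
    with \<open>X \<subseteq> Y\<close> \<open>Y \<subseteq> X \<union> B\<close> have "insert y Y \<in> ?S" by blast
    then have "card (insert y Y) \<le> card Y" by (rule Y_max)
    with matroid_indep_finite[OF m Y_indep] y(1) show False by simp
  qed
  have "Y \<in> bases E indep"
    unfolding bases_def
  proof (intro CollectI conjI allI impI)
    show "Y \<subseteq> E" by (rule matroid_indep_subset[OF m Y_indep])
    show "indep Y" by (rule Y_indep)
    fix Z assume Z: "indep Z \<and> Y \<subseteq> Z"
    show "Z = Y"
    proof (rule ccontr)
      \<comment> \<open>a larger independent \<open>Z\<close> would augment the basis \<open>B\<close>, as \<open>card B \<le> card Y\<close>\<close>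
      assume "Z \<noteq> Y"
      with Z have "Y \<subset> Z" by blast
      then have "card Y < card Z" by (rule psubset_card_mono[OF matroid_indep_finite[OF m conjunct1[OF Z]], rotated])
      with \<open>card B \<le> card Y\<close> have "card B < card Z" by simp
      then obtain z where z: "z \<in> Z - B" "indep (insert z B)"
        using matroid_augment[OF m bases_indep[OF B] conjunct1[OF Z]] by blast
      then have "insert z B = B" using bases_maximal[OF B] by blast
      with z(1) show False by blast
    qed
  qed
  with \<open>X \<subseteq> Y\<close> \<open>Y \<subseteq> X \<union> B\<close> show ?thesis by blast
qed

lemma card_1_unique: "card A = 1 \<Longrightarrow> x \<in> A \<Longrightarrow> y \<in> A \<Longrightarrow> x = y"
  by (metis card_1_singletonE singletonD)

lemma bases_meeting_once_subset:
  assumes m: "matroid E indep"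
    and K: "\<forall>B \<in> bases E indep. card (B \<inter> K) = 1"
    and L: "\<forall>B \<in> bases E indep. card (B \<inter> L) = 1"
    and K_sub: "K \<subseteq> \<Union>(bases E indep)" and "x \<in> K" "x \<in> L"
  shows "K \<subseteq> L"
proof
  have K_once: "u = v" if "B \<in> bases E indep" "u \<in> B \<inter> K" "v \<in> B \<inter> K" for B u v
    using card_1_unique[of "B \<inter> K" u v] K that by blast
  have L_once: "u = v" if "B \<in> bases E indep" "u \<in> B \<inter> L" "v \<in> B \<inter> L" for B u v
    using card_1_unique[of "B \<inter> L" u v] L that by blast
  fix y assume "y \<in> K"
  show "y \<in> L"
  proof (rule ccontr)
    assume "y \<notin> L"
    with \<open>x \<in> L\<close> have "x \<noteq> y" by blast
    obtain B where B: "B \<in> bases E indep" "y \<in> B" using \<open>y \<in> K\<close> K_sub by blast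
    have "x \<notin> B" using K_once[OF B(1)] B(2) \<open>x \<in> K\<close> \<open>y \<in> K\<close> \<open>x \<noteq> y\<close> by blast
    obtain Bx where Bx: "Bx \<in> bases E indep" "x \<in> Bx" using \<open>x \<in> K\<close> K_sub by blast
    then have "indep {x}" using matroid_indep_mono[OF m bases_indep[OF Bx(1)]] by blast
    from indep_extend_to_basis_within[OF m this B(1)]
    obtain B' where B': "B' \<in> bases E indep" "x \<in> B'" "B' \<subseteq> insert x B"
      by auto
    have "y \<notin> B'" using K_once[OF B'(1)] B'(2) \<open>x \<in> K\<close> \<open>y \<in> K\<close> \<open>x \<noteq> y\<close> by blast
    have fin: "finite B" using matroid_indep_finite[OF m bases_indep[OF B(1)]] .
    have B'_exchange: "B' = insert x (B - {y})"
    proof (rule card_subset_eq)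
      show "B' \<subseteq> insert x (B - {y})" using B'(3) \<open>y \<notin> B'\<close> by blast
      have "card (insert x (B - {y})) = card B"
        using fin B(2) \<open>x \<notin> B\<close> card.remove[of B y] by simp
      also have "\<dots> = card B'" using bases_card_eq[OF m B(1) B'(1)] .
      finally show "card B' = card (insert x (B - {y}))" ..
    qed (use fin in simp)
    obtain w where w: "B \<inter> L = {w}" using L B(1) card_1_singletonE by blast
    then have "w \<in> B' \<inter> L" "w \<noteq> x"
      using B'_exchange \<open>y \<notin> L\<close> \<open>x \<notin> B\<close> by blast+
    then show False using L_once[OF B'(1)] B'(2) \<open>x \<in> L\<close> by blast
  qed
qed

lemma is_partition_block_nonempty: "is_partition P U \<Longrightarrow> K \<in> P \<Longrightarrow> K \<noteq> {}"
  unfolding is_partition_def by blast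

lemma is_partition_block_subset: "is_partition P U \<Longrightarrow> K \<in> P \<Longrightarrow> K \<subseteq> U"
  unfolding is_partition_def by (metis Union_upper)

lemma is_partition_covers: "is_partition P U \<Longrightarrow> x \<in> U \<Longrightarrow> \<exists>K \<in> P. x \<in> K"
  unfolding is_partition_def by blast

lemma partitions_eqI:
  assumes P: "is_partition P U" and Q: "is_partition Q U"
    and overlap: "\<And>K L x. K \<in> P \<Longrightarrow> L \<in> Q \<Longrightarrow> x \<in> K \<Longrightarrow> x \<in> L \<Longrightarrow> K = L"
  shows "P = Q"
proof (intro set_eqI iffI)
  fix K
  show "K \<in> Q" if K: "K \<in> P"
  proof -
    obtain x where x: "x \<in> K" using is_partition_block_nonempty[OF P K] by blast
    then obtain L where "L \<in> Q" "x \<in> L"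
      using is_partition_covers[OF Q] is_partition_block_subset[OF P K] by blast
    with overlap[OF K _ x] show ?thesis by simp
  qed
  show "K \<in> P" if K: "K \<in> Q"
  proof -
    obtain x where x: "x \<in> K" using is_partition_block_nonempty[OF Q K] by blast
    then obtain L where "L \<in> P" "x \<in> L"
      using is_partition_covers[OF P] is_partition_block_subset[OF Q K] by blast
    with overlap[OF _ K _ x] show ?thesis by simp
  qed
qed

theorem proposition17:
  fixes E :: "'a set" and indep :: "'a set \<Rightarrow> bool" and P Q :: "'a set set"
  assumes "matroid E indep"
    and "is_partition P (\<Union>(bases E indep))"
    and "is_partition Q (\<Union>(bases E indep))"
    and "\<forall>B \<in> bases E indep. \<forall>K \<in> P. card (B \<inter> K) = 1"
    and "\<forall>B \<in> bases E indep. \<forall>L \<in> Q. card (B \<inter> L) = 1"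
  shows "P = Q"
  using assms(2,3)
proof (rule partitions_eqI)
  fix K L x assume K: "K \<in> P" and L: "L \<in> Q" and "x \<in> K" "x \<in> L"
  have K_once: "\<forall>B \<in> bases E indep. card (B \<inter> K) = 1" using assms(4) K by blast
  have L_once: "\<forall>B \<in> bases E indep. card (B \<inter> L) = 1" using assms(5) L by blast
  show "K = L"
  proof (rule subset_antisym)
    show "K \<subseteq> L"
      using bases_meeting_once_subset[OF assms(1) K_once L_once
          is_partition_block_subset[OF assms(2) K] \<open>x \<in> K\<close> \<open>x \<in> L\<close>] .
    show "L \<subseteq> K"
      using bases_meeting_once_subset[OF assms(1) L_once K_once
          is_partition_block_subset[OF assms(3) L] \<open>x \<in> L\<close> \<open>x \<in> K\<close>] .
  qed
qed

end
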